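(* The automorphism group $\Gamma(B)$ of the betweenness relation $B$ on $\mathbb Q\times\mathbb Z$ consists exactly of all positive permutations of $\mathbb Q\times\mathbb Z$ that initiate a strictly increasing map of $\mathbb Q$, together with all negative permutations of $\mathbb Q\times\mathbb Z$ that initiate a strictly decreasing map of $\mathbb Q$.
   Context: $\mathbb Q\times\mathbb Z$ denotes the set $\mathbb Q\times\mathbb Z$ with the lexicographic order: $(r,z)<(r',z')$ iff $r<r'$, or $r=r'$ and $z<z'$. $B(a,b,c)\iff(a<b<c)\vee(a>b>c)$ on $\mathbb Q\times\mathbb Z$, and $\Gamma(B)$ is the group of permutations of $\mathbb Q\times\mathbb Z$ preserving $B$. A vertical is a set $\{r\}\times\mathbb Z$. A permutation $g$ is systemic if it maps every vertical onto a vertical; it initiates the permutation $h$ of $\mathbb Q$ with $g(\{a\}\times\mathbb Z)=\{h(a)\}\times\mathbb Z$. A systemic permutation is positive if it preserves the order on each vertical and negative if it reverses the order on each vertical. *)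

theory Defs
  imports Complex_Main
begin

type_synonym qz = "rat \<times> int"

definition lexless :: "qz \<Rightarrow> qz \<Rightarrow> bool" where
  "lexless p q \<longleftrightarrow> fst p < fst q \<or> (fst p = fst q \<and> snd p < snd q)"

definition betw :: "qz \<Rightarrow> qz \<Rightarrow> qz \<Rightarrow> bool" where
  "betw a b c \<longleftrightarrow> (lexless a b \<and> lexless b c) \<or> (lexless c b \<and> lexless b a)"

definition GammaB :: "(qz \<Rightarrow> qz) set" where
  "GammaB = {g. bij g \<and> (\<forall>a b c. betw a b c \<longleftrightarrow> betw (g a) (g b) (g c))}"

definition vertical :: "rat \<Rightarrow> qz set" where
  "vertical r = {r} \<times> (UNIV :: int set)"

definition systemic :: "(qz \<Rightarrow> qz) \<Rightarrow> bool" where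
  "systemic g \<longleftrightarrow> bij g \<and> (\<forall>r. \<exists>r'. g ` vertical r = vertical r')"

definition initiated :: "(qz \<Rightarrow> qz) \<Rightarrow> rat \<Rightarrow> rat" where
  "initiated g a = (THE b. g ` vertical a = vertical b)"

definition positive_perm :: "(qz \<Rightarrow> qz) \<Rightarrow> bool" where
  "positive_perm g \<longleftrightarrow> systemic g \<and>
     (\<forall>r z z'. z < z' \<longrightarrow> lexless (g (r, z)) (g (r, z')))"

definition negative_perm :: "(qz \<Rightarrow> qz) \<Rightarrow> bool" where
  "negative_perm g \<longleftrightarrow> systemic g \<and>
     (\<forall>r z z'. z < z' \<longrightarrow> lexless (g (r, z')) (g (r, z)))"

end

theory Submission
  imports Defs "HOL-Library.Product_Lexorder"
begin

text \<open>
  A bijection of a linear order preserves betweenness exactly when it is strictly monotone or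
  strictly antitone. Two points lie on a common vertical iff only finitely many points are
  between them, so every element of \<open>\<Gamma>(B)\<close> is systemic. For a systemic permutation, being
  strictly increasing in the lexicographic order amounts to increasing on each vertical and
  initiating an increasing map of \<open>\<rat>\<close>; dually for decreasing.
\<close>

definition between :: "'a::linorder \<Rightarrow> 'a \<Rightarrow> 'a \<Rightarrow> bool" where
  "between a b c \<longleftrightarrow> a < b \<and> b < c \<or> c < b \<and> b < a"

lemma between_commute: "between a b c \<longleftrightarrow> between c b a"
  by (auto simp: between_def)

lemma lexless_iff_less: "lexless p q \<longleftrightarrow> p < q"
  by (cases p; cases q) (auto simp: lexless_def)

lemma betw_iff_between: "betw a b c \<longleftrightarrow> between a b c"
  by (simp add: betw_def between_def lexless_iff_less)

lemma between_preserving_same_orientation: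
  fixes g :: "'a::linorder \<Rightarrow> 'b::linorder"
  assumes pres: "\<And>a b c. between a b c \<Longrightarrow> between (g a) (g b) (g c)"
    and "a < b" "c < d"
  shows "g a < g b \<longleftrightarrow> g c < g d"
proof -
  define P where "P a b \<longleftrightarrow> g a < g b" for a b
  have chain: "P a b = P b c \<and> P a b = P a c" if "a < b" "b < c" for a b c
    using pres[of a b c] that unfolding P_def between_def by auto
  have same_left: "P a b = P a x" if "a < b" "a < x" for a b x
    using chain that by (cases x b rule: linorder_cases) metis+
  have same_right: "P a b = P y b" if "a < b" "y < b" for a b y
    using chain that by (cases y a rule: linorder_cases) metis+
  have "P a b = P (min a c) b"
    using same_right \<open>a < b\<close> by (metis min.strict_coboundedI1)
  also have "\<dots> = P (min a c) (max b d)"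
    using same_left \<open>a < b\<close> by (metis max.strict_coboundedI1 min.strict_coboundedI1)
  also have "\<dots> = P c (max b d)"
    using same_right \<open>c < d\<close> by (metis max.strict_coboundedI2 min.strict_coboundedI2)
  also have "\<dots> = P c d"
    using same_left \<open>c < d\<close> by (metis max.strict_coboundedI2)
  finally show ?thesis unfolding P_def .
qed

lemma between_preserving_iff_strict_mono_or_antimono:
  fixes g :: "'a::linorder \<Rightarrow> 'b::linorder"
  assumes "inj g"
  shows "(\<forall>a b c. between a b c \<longleftrightarrow> between (g a) (g b) (g c)) \<longleftrightarrow>
    strict_mono g \<or> strict_antimono_on UNIV g"
proof
  assume "\<forall>a b c. between a b c \<longleftrightarrow> between (g a) (g b) (g c)"
  then have orientation: "g a < g b \<longleftrightarrow> g c < g d" if "a < b" "c < d" for a b c d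
    using between_preserving_same_orientation that by blast
  have "g a \<noteq> g b" if "a < b" for a b
    using \<open>inj g\<close> that by (metis injD less_irrefl)
  then have "g b < g a" if "a < b" "\<not> g a < g b" for a b
    using that by (meson neq_iff)
  then show "strict_mono g \<or> strict_antimono_on UNIV g"
    using orientation unfolding strict_mono_def monotone_on_def by blast
next
  assume "strict_mono g \<or> strict_antimono_on UNIV g"
  then consider "\<And>a b. a < b \<longleftrightarrow> g a < g b" | "\<And>a b. a < b \<longleftrightarrow> g b < g a"
    unfolding strict_mono_def monotone_on_def by (metis less_asym neq_iff UNIV_I)
  then show "\<forall>a b c. between a b c \<longleftrightarrow> between (g a) (g b) (g c)"
    by cases (auto simp: between_def)
qed

lemma GammaB_eq: "GammaB = {g. bij g \<and> (strict_mono g \<or> strict_antimono_on UNIV g)}"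
  unfolding GammaB_def betw_iff_between
  using between_preserving_iff_strict_mono_or_antimono[OF bij_is_inj] by blast

lemma fst_eq_iff_finite_between:
  fixes p q :: "'a::linorder \<times> int"
  shows "fst p = fst q \<longleftrightarrow> finite {x. between p x q}"
proof
  assume "fst p = fst q"
  then have "{x. between p x q} \<subseteq> {fst p} \<times> {min (snd p) (snd q) .. max (snd p) (snd q)}"
    by (cases p; cases q) (auto simp: between_def)
  then show "finite {x. between p x q}"
    by (rule finite_subset) auto
next
  assume finite: "finite {x. between p x q}"
  show "fst p = fst q"
  proof (rule ccontr)
    assume "fst p \<noteq> fst q"
    obtain a b where "fst a < fst b" "{x. between a x b} = {x. between p x q}"
    proof (cases "fst p < fst q")
      case False
      with \<open>fst p \<noteq> fst q\<close> have "fst q < fst p" by simp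
      then show ?thesis
        using that[of q p] between_commute by blast
    qed (use that in blast)
    moreover have "(\<lambda>z. (fst a, z)) ` {snd a<..} \<subseteq> {x. between a x b}"
      using \<open>fst a < fst b\<close> by (cases a; cases b) (auto simp: between_def)
    moreover have "infinite ((\<lambda>z. (fst a, z)) ` {snd a<..})"
      by (subst finite_image_iff) (auto simp: inj_on_def infinite_Ioi)
    ultimately show False
      using finite finite_subset by metis
  qed
qed

lemma GammaB_image_between:
  assumes "g \<in> GammaB"
  shows "g ` {x. between p x q} = {y. between (g p) y (g q)}"
proof -
  have "bij g" and pres: "\<And>a b c. betw a b c \<longleftrightarrow> betw (g a) (g b) (g c)"
    using assms by (auto simp: GammaB_def)
  show ?thesis
  proof
    show "g ` {x. between p x q} \<subseteq> {y. between (g p) y (g q)}"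
      using pres unfolding betw_iff_between by blast
  next
    show "{y. between (g p) y (g q)} \<subseteq> g ` {x. between p x q}"
    proof
      fix y assume "y \<in> {y. between (g p) y (g q)}"
      moreover obtain x where "y = g x"
        using \<open>bij g\<close> by (metis bij_pointE)
      ultimately show "y \<in> g ` {x. between p x q}"
        using pres[of p x q] by (simp add: betw_iff_between)
    qed
  qed
qed

lemma GammaB_fst_eq_iff:
  assumes "g \<in> GammaB"
  shows "fst (g p) = fst (g q) \<longleftrightarrow> fst p = fst q"
proof -
  have "inj g"
    using assms by (simp add: GammaB_def bij_is_inj)
  then have "finite {x. between p x q} \<longleftrightarrow> finite (g ` {x. between p x q})"
    by (simp add: finite_image_iff inj_on_subset)
  then show ?thesis
    using GammaB_image_between[OF assms] fst_eq_iff_finite_between by metis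
qed

lemma systemicI:
  assumes "bij g" and fst_eq: "\<And>p q. fst (g p) = fst (g q) \<longleftrightarrow> fst p = fst q"
  shows "systemic g"
  unfolding systemic_def
proof (intro conjI allI)
  fix r
  have "g ` vertical r = vertical (fst (g (r, 0)))"
  proof (intro equalityI subsetI)
    fix y assume "y \<in> vertical (fst (g (r, 0)))"
    moreover obtain x where "y = g x"
      using \<open>bij g\<close> by (metis bij_pointE)
    ultimately show "y \<in> g ` vertical r"
      using fst_eq[of x "(r, 0)"] by (cases x) (auto simp: vertical_def)
  next
    fix y assume "y \<in> g ` vertical r"
    then obtain z where "y = g (r, z)"
      by (auto simp: vertical_def)
    then show "y \<in> vertical (fst (g (r, 0)))"
      using fst_eq[of "(r, z)" "(r, 0)"] by (simp add: vertical_def mem_Times_iff)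
  qed
  then show "\<exists>r'. g ` vertical r = vertical r'" ..
qed fact

lemma GammaB_systemic: "g \<in> GammaB \<Longrightarrow> systemic g"
  using GammaB_fst_eq_iff by (intro systemicI) (auto simp: GammaB_def)

lemma vertical_inject: "vertical a = vertical b \<longleftrightarrow> a = b"
  unfolding vertical_def by auto

lemma systemic_image_vertical:
  assumes "systemic g"
  shows "g ` vertical r = vertical (initiated g r)"
proof -
  obtain r' where r': "g ` vertical r = vertical r'"
    using assms unfolding systemic_def by blast
  then have "initiated g r = r'"
    unfolding initiated_def by (auto simp: vertical_inject)
  with r' show ?thesis by simp
qed

lemma initiated_eq_fst:
  assumes "systemic g"
  shows "initiated g r = fst (g (r, z))"
proof -
  have "g (r, z) \<in> vertical (initiated g r)"
    unfolding systemic_image_vertical[OF assms, symmetric] by (simp add: vertical_def)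
  then show ?thesis
    by (simp add: vertical_def mem_Times_iff)
qed

lemma inj_initiated:
  assumes "systemic g"
  shows "inj (initiated g)"
proof (rule injI)
  fix a b assume "initiated g a = initiated g b"
  then have "g ` vertical a = g ` vertical b"
    using systemic_image_vertical[OF assms] by simp
  moreover have "inj g"
    using assms by (simp add: systemic_def bij_is_inj)
  ultimately show "a = b"
    by (simp add: inj_image_eq_iff vertical_inject)
qed

lemma systemic_strict_mono_iff:
  assumes "systemic g"
  shows "strict_mono g \<longleftrightarrow> positive_perm g \<and> strict_mono (initiated g)"
proof
  assume mono: "strict_mono g"
  have "initiated g a < initiated g b" if "a < b" for a b
  proof -
    have "fst (g (a, 0)) \<le> fst (g (b, 0))"
      using strict_monoD[OF mono, of "(a, 0)" "(b, 0)"] \<open>a < b\<close> by (auto simp: less_prod_def')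
    moreover have "initiated g a \<noteq> initiated g b"
      using inj_initiated[OF assms] \<open>a < b\<close> by (auto dest: injD)
    ultimately show ?thesis
      using initiated_eq_fst[OF assms] by (metis order_le_neq_trans)
  qed
  then show "positive_perm g \<and> strict_mono (initiated g)"
    using assms mono by (auto simp: positive_perm_def lexless_iff_less strict_mono_def)
next
  assume "positive_perm g \<and> strict_mono (initiated g)"
  then have vertical_mono: "\<And>r z z'. z < z' \<Longrightarrow> g (r, z) < g (r, z')"
    and initiated_mono: "strict_mono (initiated g)"
    by (auto simp: positive_perm_def lexless_iff_less)
  show "strict_mono g"
  proof (rule strict_monoI)
    fix p q :: qz assume "p < q"
    then consider "fst p = fst q" "snd p < snd q" | "fst p < fst q"
      by (auto simp: less_prod_def')
    then show "g p < g q"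
    proof cases
      case 1 then show ?thesis
        using vertical_mono by (metis prod.collapse)
    next
      case 2 then show ?thesis
        using strict_monoD[OF initiated_mono] initiated_eq_fst[OF assms]
        by (metis prod.collapse less_prod_def')
    qed
  qed
qed

lemma systemic_strict_antimono_iff:
  assumes "systemic g"
  shows "strict_antimono_on UNIV g \<longleftrightarrow>
    negative_perm g \<and> strict_antimono_on UNIV (initiated g)"
proof
  assume anti: "strict_antimono_on UNIV g"
  have "initiated g b < initiated g a" if "a < b" for a b
  proof -
    have "fst (g (b, 0)) \<le> fst (g (a, 0))"
      using monotoneD[OF anti, of "(a, 0)" "(b, 0)"] \<open>a < b\<close> by (auto simp: less_prod_def')
    moreover have "initiated g a \<noteq> initiated g b"
      using inj_initiated[OF assms] \<open>a < b\<close> by (auto dest: injD)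
    ultimately show ?thesis
      using initiated_eq_fst[OF assms] by (metis order_le_neq_trans)
  qed
  then show "negative_perm g \<and> strict_antimono_on UNIV (initiated g)"
    using assms anti by (auto simp: negative_perm_def lexless_iff_less monotone_on_def)
next
  assume "negative_perm g \<and> strict_antimono_on UNIV (initiated g)"
  then have vertical_anti: "\<And>r z z'. z < z' \<Longrightarrow> g (r, z') < g (r, z)"
    and initiated_anti: "strict_antimono_on UNIV (initiated g)"
    by (auto simp: negative_perm_def lexless_iff_less)
  show "strict_antimono_on UNIV g"
  proof (rule monotone_onI)
    fix p q :: qz assume "p < q"
    then consider "fst p = fst q" "snd p < snd q" | "fst p < fst q"
      by (auto simp: less_prod_def')
    then show "g q < g p"
    proof cases
      case 1 then show ?thesis
        using vertical_anti by (metis prod.collapse)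
    next
      case 2 then show ?thesis
        using monotoneD[OF initiated_anti] initiated_eq_fst[OF assms]
        by (metis UNIV_I prod.collapse less_prod_def')
    qed
  qed
qed

theorem mainTheorem11:
  shows "GammaB =
    {g. positive_perm g \<and> (\<forall>a b. a < b \<longrightarrow> initiated g a < initiated g b)} \<union>
    {g. negative_perm g \<and> (\<forall>a b. a < b \<longrightarrow> initiated g b < initiated g a)}"
proof (intro set_eqI iffI)
  fix g assume "g \<in> GammaB"
  then have "systemic g" "strict_mono g \<or> strict_antimono_on UNIV g"
    by (auto simp: GammaB_systemic GammaB_eq)
  then show "g \<in> {g. positive_perm g \<and> (\<forall>a b. a < b \<longrightarrow> initiated g a < initiated g b)} \<union>
    {g. negative_perm g \<and> (\<forall>a b. a < b \<longrightarrow> initiated g b < initiated g a)}"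
    using systemic_strict_mono_iff systemic_strict_antimono_iff
    by (auto simp: strict_mono_def monotone_on_def)
next
  fix g assume g: "g \<in> {g. positive_perm g \<and> (\<forall>a b. a < b \<longrightarrow> initiated g a < initiated g b)} \<union>
    {g. negative_perm g \<and> (\<forall>a b. a < b \<longrightarrow> initiated g b < initiated g a)}"
  then have "systemic g"
    by (auto simp: positive_perm_def negative_perm_def)
  with g have "bij g" "strict_mono g \<or> strict_antimono_on UNIV g"
    using systemic_strict_mono_iff systemic_strict_antimono_iff
    by (auto simp: systemic_def strict_mono_def monotone_on_def)
  then show "g \<in> GammaB"
    by (simp add: GammaB_eq)
qed

end
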